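(* Let $G_1=(V_1,E_1)$ and $G_2=(V_2,E_2)$ be graphs such that $V_1\cap V_2$ induces a clique in both $G_1$ and $G_2$ and $|V_1\cap V_2|=k\le 3$, and let $G=(V_1\cup V_2,E_1\cup E_2)$ (their clique $k$-sum). Then $\kappa(G)=\max(\kappa(G_1),\kappa(G_2))$.
   Context: For a graph $G=([n],E)$ and $w\in\mathbb{R}^E$, let $\mathrm{ip}(G,w)=\max_{x\in\{\pm1\}^n}\sum_{ij\in E}w_{ij}x_ix_j$ and $\mathrm{sdp}(G,w)=\max\sum_{ij\in E}w_{ij}u_i^Tu_j$, the maximum over unit vectors $u_1,\dots,u_n\in\mathbb{R}^n$. The Grothendieck constant of $G$ is $\kappa(G)=\sup_{w\in\mathbb{R}^E}\mathrm{sdp}(G,w)/\mathrm{ip}(G,w)$. *)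

theory Defs
  imports Complex_Main
begin

definition graph :: "'a set \<Rightarrow> 'a set set \<Rightarrow> bool" where
  "graph V E \<longleftrightarrow> finite V \<and> E \<subseteq> {{i, j} | i j. i \<in> V \<and> j \<in> V \<and> i \<noteq> j}"

text \<open>Sum over edges ij of w_ij * f i j (f symmetric), written as half the sum over ordered
  pairs of adjacent vertices.\<close>
definition edge_sum :: "'a set \<Rightarrow> 'a set set \<Rightarrow> ('a set \<Rightarrow> real) \<Rightarrow> ('a \<Rightarrow> 'a \<Rightarrow> real) \<Rightarrow> real" where
  "edge_sum V E w f = (\<Sum>i\<in>V. \<Sum>j\<in>V. if {i, j} \<in> E then w {i, j} * f i j else 0) / 2"

definition ip :: "'a set \<Rightarrow> 'a set set \<Rightarrow> ('a set \<Rightarrow> real) \<Rightarrow> real" where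
  "ip V E w = Max {edge_sum V E w (\<lambda>i j. x i * x j) | x :: 'a \<Rightarrow> real.
                     \<forall>i\<in>V. x i = 1 \<or> x i = -1}"

text \<open>Vectors in R^n, n = card V, represented as functions nat => real on coordinates 0..n-1.\<close>
definition sdp :: "'a set \<Rightarrow> 'a set set \<Rightarrow> ('a set \<Rightarrow> real) \<Rightarrow> real" where
  "sdp V E w = Sup {edge_sum V E w (\<lambda>i j. \<Sum>k<card V. u i k * u j k) | u :: 'a \<Rightarrow> nat \<Rightarrow> real.
                     \<forall>i\<in>V. (\<Sum>k<card V. (u i k)\<^sup>2) = 1}"

definition groth :: "'a set \<Rightarrow> 'a set set \<Rightarrow> real" where
  "groth V E = Sup {sdp V E w / ip V E w | w :: 'a set \<Rightarrow> real. True}"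

end

theory Submission
  imports Defs "HOL-Library.FuncSet"
begin

(* For i = 1, 2 the graph G_i is a subgraph of G: extending weights by zero keeps ip and can only
   increase sdp (pad the vectors), so kappa(G_i) <= kappa(G).
   Conversely, given weights w on G, move weight across the clique C = V1 \<inter> V2: write
   w = w1 + w2 with w1 on G1 and w2 on G2, choosing the clique weights of w1 so that every sign
   pattern on C extends to an optimal +-1 vector of (G1, w1). This is possible because the best
   value of the rest of G1 given the signs on C is an even function of at most three signs, and
   every such function is a constant minus a combination of the products y_a y_b. Gluing an
   optimum of (G2, w2) to a matching optimum of (G1, w1) gives ip(G1,w1) + ip(G2,w2) <= ip(G,w),
   while sdp(G,w) <= sdp(G1,w1) + sdp(G2,w2) because a vector solution for G restricts to each
   side once it is rotated into card V_i dimensions by Householder reflections. Hence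
   sdp(G,w) <= max(kappa(G1), kappa(G2)) ip(G,w). *)

abbreviation signs :: "'a set \<Rightarrow> ('a \<Rightarrow> real) \<Rightarrow> bool" where
  "signs V x \<equiv> \<forall>i\<in>V. x i = 1 \<or> x i = -1"

abbreviation outer :: "('a \<Rightarrow> real) \<Rightarrow> 'a \<Rightarrow> 'a \<Rightarrow> real" where
  "outer x \<equiv> \<lambda>i j. x i * x j"

abbreviation dot :: "nat \<Rightarrow> (nat \<Rightarrow> real) \<Rightarrow> (nat \<Rightarrow> real) \<Rightarrow> real" where
  "dot N a b \<equiv> \<Sum>k<N. a k * b k"

abbreviation gram :: "nat \<Rightarrow> ('a \<Rightarrow> nat \<Rightarrow> real) \<Rightarrow> 'a \<Rightarrow> 'a \<Rightarrow> real" where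
  "gram N u \<equiv> \<lambda>i j. dot N (u i) (u j)"

abbreviation unit_vectors :: "nat \<Rightarrow> ('a \<Rightarrow> nat \<Rightarrow> real) \<Rightarrow> 'a set \<Rightarrow> bool" where
  "unit_vectors N u V \<equiv> \<forall>i\<in>V. (\<Sum>k<N. (u i k)\<^sup>2) = 1"

lemma graph_finite: "graph V E \<Longrightarrow> finite V"
  by (simp add: graph_def)

lemma graph_edge_subset: "graph V E \<Longrightarrow> e \<in> E \<Longrightarrow> e \<subseteq> V"
  unfolding graph_def by blast

lemma graph_edgeD:
  assumes "graph V E" "{i, j} \<in> E"
  shows "i \<in> V" "j \<in> V" "i \<noteq> j"
proof -
  obtain a b where "{i, j} = {a, b}" "a \<in> V" "b \<in> V" "a \<noteq> b"
    using assms unfolding graph_def by blast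
  then show "i \<in> V" "j \<in> V" "i \<noteq> j" by (metis doubleton_eq_iff)+
qed

lemma graph_no_loop: "graph V E \<Longrightarrow> {i} \<notin> E"
  using graph_edgeD(3)[of V E i i] by auto

lemma graph_Un: "graph V1 E1 \<Longrightarrow> graph V2 E2 \<Longrightarrow> graph (V1 \<union> V2) (E1 \<union> E2)"
  unfolding graph_def by blast

section \<open>Edge sums\<close>

lemma edge_sum_cong:
  assumes "\<And>i j. i \<in> V \<Longrightarrow> j \<in> V \<Longrightarrow> {i, j} \<in> E \<Longrightarrow> w {i, j} * f i j = w' {i, j} * g i j"
  shows "edge_sum V E w f = edge_sum V E w' g"
  unfolding edge_sum_def using assms by (intro arg_cong[where f="\<lambda>s. s / 2"] sum.cong) auto

lemma edge_sum_zero_weights: "edge_sum V E (\<lambda>_. 0) f = 0"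
  by (simp add: edge_sum_def cong: if_cong)

lemma edge_sum_Un:
  assumes "\<And>e. e \<in> E1 \<union> E2 \<Longrightarrow> w e = (if e \<in> E1 then w1 e else 0) + (if e \<in> E2 then w2 e else 0)"
  shows "edge_sum V (E1 \<union> E2) w f = edge_sum V E1 w1 f + edge_sum V E2 w2 f"
proof -
  have "(if {i, j} \<in> E1 \<union> E2 then w {i, j} * f i j else 0)
      = (if {i, j} \<in> E1 then w1 {i, j} * f i j else 0) + (if {i, j} \<in> E2 then w2 {i, j} * f i j else 0)"
    for i j using assms[of "{i, j}"] by (auto simp: distrib_right)
  then show ?thesis unfolding edge_sum_def by (simp add: sum.distrib add_divide_distrib)
qed

lemma edge_sum_add: "edge_sum V E (\<lambda>e. w e + w' e) f = edge_sum V E w f + edge_sum V E w' f"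
  using edge_sum_Un[of E E "\<lambda>e. w e + w' e" w w' V f] by simp

lemma edge_sum_restrict_weights:
  assumes "finite V" "C \<subseteq> V"
  shows "edge_sum V E (\<lambda>e. if e \<subseteq> C then w e else 0) f = edge_sum C E w f"
proof -
  let ?g = "\<lambda>i j. if {i, j} \<in> E then w {i, j} * f i j else 0"
  have "(\<Sum>j\<in>V. if {i, j} \<in> E then (if {i, j} \<subseteq> C then w {i, j} else 0) * f i j else 0)
      = (if i \<in> C then \<Sum>j\<in>C. ?g i j else 0)" for i
    using assms by (auto intro!: sum.mono_neutral_cong_right sum.neutral)
  then have "(\<Sum>i\<in>V. \<Sum>j\<in>V. if {i, j} \<in> E then (if {i, j} \<subseteq> C then w {i, j} else 0) * f i j else 0)
      = (\<Sum>i\<in>C. \<Sum>j\<in>C. ?g i j)"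
    using assms by (auto intro!: sum.mono_neutral_cong_right)
  then show ?thesis unfolding edge_sum_def by simp
qed

lemma edge_sum_superset_vertices:
  assumes "graph V E" "finite V'" "V \<subseteq> V'"
  shows "edge_sum V' E w f = edge_sum V E w f"
proof -
  have "edge_sum V' E w f = edge_sum V' E (\<lambda>e. if e \<subseteq> V then w e else 0) f"
    using graph_edge_subset[OF assms(1)] by (intro edge_sum_cong) auto
  then show ?thesis using edge_sum_restrict_weights[OF assms(2,3)] by simp
qed

lemma edge_sum_zero_extension:
  assumes "graph V1 E1" "finite V" "V1 \<subseteq> V" "E1 \<subseteq> E"
  shows "edge_sum V E (\<lambda>e. if e \<in> E1 then w e else 0) f = edge_sum V1 E1 w f"
proof -
  have "edge_sum V E (\<lambda>e. if e \<in> E1 then w e else 0) f = edge_sum V E1 w f"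
    using edge_sum_Un[of E1 E "\<lambda>e. if e \<in> E1 then w e else 0" w "\<lambda>_. 0" V f] assms(4)
    by (simp add: edge_sum_zero_weights Un_absorb1)
  then show ?thesis using edge_sum_superset_vertices[OF assms(1-3)] by simp
qed

section \<open>The integer program\<close>

lemma finite_sign_values:
  assumes "finite V" "\<And>x x'. (\<forall>i\<in>V. x i = x' i) \<Longrightarrow> g x = g x'"
  shows "finite {g x | x. signs V x \<and> P x}"
proof -
  have "{g x | x. signs V x \<and> P x} \<subseteq> g ` (PiE V (\<lambda>_. {-1, 1::real}))"
  proof
    fix y assume "y \<in> {g x | x. signs V x \<and> P x}"
    then obtain x where x: "y = g x" "signs V x" by blast
    then have "y = g (restrict x V)" using assms(2)[of x "restrict x V"] by simp
    moreover have "restrict x V \<in> PiE V (\<lambda>_. {-1, 1::real})"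
      using x(2) by (auto simp: restrict_PiE_iff)
    ultimately show "y \<in> g ` (PiE V (\<lambda>_. {-1, 1::real}))" by blast
  qed
  moreover have "finite (PiE V (\<lambda>_. {-1, 1::real}))" using assms(1) by (intro finite_PiE) auto
  ultimately show ?thesis by (meson finite_surj)
qed

lemma finite_ip_values:
  assumes "finite V"
  shows "finite {edge_sum V E w (outer x) | x. signs V x}"
proof -
  have "finite {edge_sum V E w (outer x) | x. signs V x \<and> True}"
    by (rule finite_sign_values[OF assms]) (rule edge_sum_cong, simp)
  then show ?thesis by simp
qed

lemma ip_ge: "finite V \<Longrightarrow> signs V x \<Longrightarrow> edge_sum V E w (outer x) \<le> ip V E w"
  unfolding ip_def by (intro Max_ge finite_ip_values) auto

lemma ip_attained:
  assumes "finite V"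
  obtains x where "signs V x" "ip V E w = edge_sum V E w (outer x)"
proof -
  have "{edge_sum V E w (outer x) | x. signs V x} \<noteq> {}" by auto
  then have "ip V E w \<in> {edge_sum V E w (outer x) | x. signs V x}"
    unfolding ip_def by (intro Max_in finite_ip_values assms)
  then show ?thesis using that by blast
qed

lemma edge_sum_outer_insert:
  assumes "finite U" "v \<notin> U" "{v} \<notin> E"
  shows "edge_sum (insert v U) E w (outer y)
       = edge_sum U E w (outer y) + y v * (\<Sum>j\<in>U. if {v, j} \<in> E then w {v, j} * y j else 0)"
proof -
  define g where "g i j = (if {i, j} \<in> E then w {i, j} * (y i * y j) else 0)" for i j
  define S where "S = (\<Sum>j\<in>U. if {v, j} \<in> E then w {v, j} * y j else 0)"
  have row: "(\<Sum>j\<in>U. g v j) = y v * S" and column: "(\<Sum>i\<in>U. g i v) = y v * S"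
    unfolding S_def sum_distrib_left g_def by (auto simp: insert_commute intro!: sum.cong)
  have "(\<Sum>i\<in>insert v U. \<Sum>j\<in>insert v U. g i j)
      = g v v + (\<Sum>j\<in>U. g v j) + (\<Sum>i\<in>U. g i v) + (\<Sum>i\<in>U. \<Sum>j\<in>U. g i j)"
    using assms(1,2) by (simp add: sum.distrib)
  also have "\<dots> = 2 * (y v * S) + (\<Sum>i\<in>U. \<Sum>j\<in>U. g i j)"
    using assms(3) unfolding row column by (simp add: g_def)
  finally show ?thesis unfolding edge_sum_def g_def[symmetric] S_def[symmetric] by simp
qed

text \<open>Choosing the sign of each new vertex according to the sign of its weighted
  neighbourhood sum never decreases the value.\<close>

lemma exists_sign_extension_ge:
  assumes "finite T" "finite S" "\<And>i. {i} \<notin> E" "signs S x"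
  shows "\<exists>x'. signs (S \<union> T) x' \<and> edge_sum S E w (outer x) \<le> edge_sum (S \<union> T) E w (outer x')"
  using assms(1)
proof (induction T rule: finite_induct)
  case empty
  then show ?case using assms(4) by auto
next
  case (insert v T)
  then obtain x' where x': "signs (S \<union> T) x'"
    "edge_sum S E w (outer x) \<le> edge_sum (S \<union> T) E w (outer x')" by blast
  show ?case
  proof (cases "v \<in> S \<union> T")
    case True
    then have "S \<union> insert v T = S \<union> T" by auto
    then show ?thesis using x' by (intro exI[of _ x']) simp
  next
    case False
    define U where "U = S \<union> T"
    define s where "s = (\<Sum>j\<in>U. if {v, j} \<in> E then w {v, j} * x' j else 0)"
    define y where "y = x'(v := if s \<ge> 0 then 1 else -1)"
    have "edge_sum U E w (outer y) = edge_sum U E w (outer x')"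
      using False by (intro edge_sum_cong) (auto simp: y_def U_def)
    moreover have "(\<Sum>j\<in>U. if {v, j} \<in> E then w {v, j} * y j else 0) = s"
      using False unfolding s_def y_def U_def by (intro sum.cong) auto
    ultimately have "edge_sum (insert v U) E w (outer y) = edge_sum U E w (outer x') + y v * s"
      using edge_sum_outer_insert[of U v E w y] False insert(1) assms(2,3) by (simp add: U_def)
    moreover have "y v * s \<ge> 0" by (simp add: y_def)
    moreover have "signs (insert v U) y" using x'(1) by (simp add: y_def U_def)
    ultimately show ?thesis using x'(2) by (intro exI[of _ y]) (auto simp: U_def)
  qed
qed

lemma ip_nonneg:
  assumes "graph V E"
  shows "0 \<le> ip V E w"
proof -
  have fin: "finite V" using assms by (rule graph_finite)
  obtain x where "signs V x" "edge_sum {} E w (outer (\<lambda>_. 1)) \<le> edge_sum V E w (outer x)"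
    using exists_sign_extension_ge[OF fin _ graph_no_loop[OF assms], of "{}" "\<lambda>_. 1" w] by auto
  then show ?thesis using ip_ge[OF fin, of x E w] by (simp add: edge_sum_def)
qed

lemma ip_ge_abs_weight:
  assumes "graph V E" "{a, b} \<in> E"
  shows "\<bar>w {a, b}\<bar> \<le> ip V E w"
proof -
  have fin: "finite V" using assms(1) by (rule graph_finite)
  have ab: "a \<in> V" "b \<in> V" "a \<noteq> b" using graph_edgeD[OF assms] by auto
  define x where "x = (\<lambda>i. if i = b \<and> w {a, b} < 0 then -1 else 1::real)"
  have "edge_sum {a, b} E w (outer x) = w {a, b} * (x a * x b)"
    using ab assms(2) graph_no_loop[OF assms(1)] unfolding edge_sum_def
    by (simp add: insert_commute)
  also have "\<dots> = \<bar>w {a, b}\<bar>" using ab by (auto simp: x_def)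
  finally have abs_value: "edge_sum {a, b} E w (outer x) = \<bar>w {a, b}\<bar>" .
  have "signs {a, b} x" by (auto simp: x_def)
  from exists_sign_extension_ge[OF fin _ graph_no_loop[OF assms(1)] this, of w]
  obtain x' where x': "signs ({a, b} \<union> V) x'"
    "edge_sum {a, b} E w (outer x) \<le> edge_sum ({a, b} \<union> V) E w (outer x')"
    by auto
  have "{a, b} \<union> V = V" using ab by auto
  then show ?thesis using x' abs_value ip_ge[OF fin, of x' E w] by simp
qed

section \<open>The semidefinite program and the Grothendieck constant\<close>

lemma abs_dot_le_one:
  fixes a b :: "nat \<Rightarrow> real"
  assumes "(\<Sum>k<N. (a k)\<^sup>2) = 1" "(\<Sum>k<N. (b k)\<^sup>2) = 1"
  shows "\<bar>dot N a b\<bar> \<le> 1"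
proof -
  have "\<bar>dot N a b\<bar> \<le> (\<Sum>k<N. \<bar>a k\<bar> * \<bar>b k\<bar>)" unfolding abs_mult[symmetric] by (rule sum_abs)
  also have "\<dots> \<le> (\<Sum>k<N. ((a k)\<^sup>2 + (b k)\<^sup>2) / 2)"
  proof (rule sum_mono)
    fix k
    show "\<bar>a k\<bar> * \<bar>b k\<bar> \<le> ((a k)\<^sup>2 + (b k)\<^sup>2) / 2"
      using sum_squares_bound[of "\<bar>a k\<bar>" "\<bar>b k\<bar>"] by simp
  qed
  also have "\<dots> = 1" using assms by (simp add: sum_divide_distrib[symmetric] sum.distrib)
  finally show ?thesis .
qed

lemma edge_sum_gram_le_abs_weights:
  assumes "unit_vectors N u V"
  shows "edge_sum V E w (gram N u) \<le> edge_sum V E (\<lambda>e. \<bar>w e\<bar>) (\<lambda>_ _. 1)"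
  unfolding edge_sum_def
proof (intro divide_right_mono sum_mono)
  fix i j assume "i \<in> V" "j \<in> V"
  then have "\<bar>dot N (u i) (u j)\<bar> \<le> 1" using assms by (intro abs_dot_le_one) auto
  have "w {i, j} * dot N (u i) (u j) \<le> \<bar>w {i, j}\<bar> * \<bar>dot N (u i) (u j)\<bar>"
    by (metis abs_ge_self abs_mult)
  also have "\<dots> \<le> \<bar>w {i, j}\<bar>" using \<open>\<bar>dot N (u i) (u j)\<bar> \<le> 1\<close> by (simp add: mult_left_le)
  finally have "w {i, j} * dot N (u i) (u j) \<le> \<bar>w {i, j}\<bar>" .
  then show "(if {i, j} \<in> E then w {i, j} * dot N (u i) (u j) else 0)
          \<le> (if {i, j} \<in> E then \<bar>w {i, j}\<bar> * 1 else 0)" by simp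
qed simp

lemma edge_sum_abs_weights_le_ip:
  assumes "graph V E"
  shows "edge_sum V E (\<lambda>e. \<bar>w e\<bar>) (\<lambda>_ _. 1) \<le> real (card V) ^ 2 * ip V E w"
proof -
  have "(\<Sum>i\<in>V. \<Sum>j\<in>V. if {i, j} \<in> E then \<bar>w {i, j}\<bar> * 1 else 0) \<le> (\<Sum>i\<in>V. \<Sum>j\<in>V. ip V E w)"
    using ip_ge_abs_weight[OF assms] ip_nonneg[OF assms] by (intro sum_mono) auto
  also have "\<dots> = real (card V) ^ 2 * ip V E w" by (simp add: power2_eq_square)
  finally have "(\<Sum>i\<in>V. \<Sum>j\<in>V. if {i, j} \<in> E then \<bar>w {i, j}\<bar> * 1 else 0) \<le> real (card V) ^ 2 * ip V E w" .
  moreover have "0 \<le> real (card V) ^ 2 * ip V E w" using ip_nonneg[OF assms, of w] by simp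
  ultimately show ?thesis unfolding edge_sum_def by linarith
qed

lemma unit_vectors_first_basis:
  assumes "0 < N"
  shows "unit_vectors N (\<lambda>_ k. if k = 0 then 1 else 0) V"
proof -
  have "(\<Sum>k<N. (if k = 0 then 1 else 0 :: real)\<^sup>2) = (\<Sum>k<N. if k = 0 then 1 else 0)"
    by (intro sum.cong) auto
  then show ?thesis using assms by simp
qed

lemma sdp_ge:
  assumes "unit_vectors (card V) u V"
  shows "edge_sum V E w (gram (card V) u) \<le> sdp V E w"
  unfolding sdp_def using assms edge_sum_gram_le_abs_weights
  by (intro cSup_upper bdd_aboveI[of _ "edge_sum V E (\<lambda>e. \<bar>w e\<bar>) (\<lambda>_ _. 1)"]) auto

lemma sdp_le:
  assumes "finite V" "\<And>u. unit_vectors (card V) u V \<Longrightarrow> edge_sum V E w (gram (card V) u) \<le> B"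
  shows "sdp V E w \<le> B"
proof -
  have "unit_vectors (card V) (\<lambda>_ k. if k = 0 then 1 else 0) V"
  proof (cases "V = {}")
    case False
    then show ?thesis using assms(1) by (intro unit_vectors_first_basis) (simp add: card_gt_0_iff)
  qed simp
  then show ?thesis unfolding sdp_def using assms(2) by (intro cSup_least) auto
qed

lemma sdp_le_card_sq_ip:
  assumes "graph V E"
  shows "sdp V E w \<le> real (card V) ^ 2 * ip V E w"
  using graph_finite[OF assms]
proof (rule sdp_le)
  fix u assume "unit_vectors (card V) u V"
  from edge_sum_gram_le_abs_weights[OF this] edge_sum_abs_weights_le_ip[OF assms]
  show "edge_sum V E w (gram (card V) u) \<le> real (card V) ^ 2 * ip V E w" by (rule order_trans)
qed

lemma groth_ratio_bdd:
  assumes G: "graph V E"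
  shows "bdd_above {sdp V E w / ip V E w | w. True}"
proof (rule bdd_aboveI[of _ "real (card V) ^ 2"])
  fix r assume "r \<in> {sdp V E w / ip V E w | w. True}"
  then obtain w where "r = sdp V E w / ip V E w" by blast
  moreover have "sdp V E w \<le> real (card V) ^ 2 * ip V E w" "0 \<le> ip V E w"
    using sdp_le_card_sq_ip[OF G] ip_nonneg[OF G] by auto
  ultimately show "r \<le> real (card V) ^ 2" by (cases "ip V E w = 0") (auto simp: divide_le_eq)
qed

lemma ratio_le_groth: "graph V E \<Longrightarrow> sdp V E w / ip V E w \<le> groth V E"
  unfolding groth_def by (rule cSup_upper[OF _ groth_ratio_bdd]) auto

lemma ip_zero_weights: "ip V E (\<lambda>_. 0) = 0"
proof -
  have "{edge_sum V E (\<lambda>_. 0) (outer x) | x. signs V x} = {0}"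
    by (auto simp: edge_sum_zero_weights intro!: exI[of _ "\<lambda>_. 1"])
  then show ?thesis unfolding ip_def by simp
qed

lemma groth_nonneg: "graph V E \<Longrightarrow> 0 \<le> groth V E"
  using ratio_le_groth[of V E "\<lambda>_. 0"] by (simp add: ip_zero_weights)

lemma sdp_le_groth_mult_ip:
  assumes "graph V E"
  shows "sdp V E w \<le> groth V E * ip V E w"
proof (cases "ip V E w = 0")
  case True
  then show ?thesis using sdp_le_card_sq_ip[OF assms, of w] by simp
next
  case False
  then have "0 < ip V E w" using ip_nonneg[OF assms, of w] by simp
  then show ?thesis using ratio_le_groth[OF assms, of w] by (simp add: divide_le_eq)
qed

lemma groth_le:
  assumes "graph V E" "0 \<le> K" "\<And>w. sdp V E w \<le> K * ip V E w"
  shows "groth V E \<le> K"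
  unfolding groth_def
proof (rule cSup_least)
  fix r assume "r \<in> {sdp V E w / ip V E w | w. True}"
  then obtain w where r: "r = sdp V E w / ip V E w" by blast
  show "r \<le> K"
  proof (cases "ip V E w = 0")
    case False
    then have "0 < ip V E w" using ip_nonneg[OF assms(1), of w] by simp
    then show ?thesis using assms(3)[of w] unfolding r by (simp add: divide_le_eq)
  qed (simp add: r assms(2))
qed auto

section \<open>Rotating vector solutions into fewer dimensions\<close>

definition reflect :: "nat \<Rightarrow> (nat \<Rightarrow> real) \<Rightarrow> (nat \<Rightarrow> real) \<Rightarrow> nat \<Rightarrow> real" where
  "reflect N h x = (if dot N h h = 0 then x else (\<lambda>k. x k - 2 * dot N x h / dot N h h * h k))"

lemma dot_diff_scaled:
  "dot N (\<lambda>k. x k - a * h k) (\<lambda>k. y k - b * h k)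
     = dot N x y - b * dot N x h - a * dot N y h + a * b * dot N h h"
  by (simp add: algebra_simps sum_subtractf sum.distrib sum_distrib_left)

lemma dot_reflect: "dot N (reflect N h x) (reflect N h y) = dot N x y"
proof (cases "dot N h h = 0")
  case False
  define a b c where "a = dot N x h" and "b = dot N y h" and "c = dot N h h"
  have "dot N (reflect N h x) (reflect N h y)
      = dot N (\<lambda>k. x k - 2 * a / c * h k) (\<lambda>k. y k - 2 * b / c * h k)"
    using False by (simp add: reflect_def a_def b_def c_def)
  also have "\<dots> = dot N x y - 2 * b / c * a - 2 * a / c * b + 2 * a / c * (2 * b / c) * c"
    unfolding dot_diff_scaled a_def b_def c_def ..
  also have "\<dots> = dot N x y" using False by (simp add: c_def[symmetric] field_simps)
  finally show ?thesis .
qed (simp add: reflect_def)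

lemma reflect_orthogonal: "dot N x h = 0 \<Longrightarrow> reflect N h x = x"
  by (simp add: reflect_def)

definition tail_coords :: "nat \<Rightarrow> nat \<Rightarrow> (nat \<Rightarrow> real) \<Rightarrow> nat \<Rightarrow> real" where
  "tail_coords N p a k = (if p \<le> k \<and> k < N then a k else 0)"

definition householder :: "nat \<Rightarrow> nat \<Rightarrow> (nat \<Rightarrow> real) \<Rightarrow> nat \<Rightarrow> real" where
  "householder N p a k = tail_coords N p a k
     - (if k = p then sqrt (dot N (tail_coords N p a) (tail_coords N p a)) else 0)"

lemma householder_orthogonal:
  assumes "\<forall>k. p \<le> k \<longrightarrow> k < N \<longrightarrow> x k = 0"
  shows "dot N x (householder N p a) = 0"
  using assms by (intro sum.neutral) (auto simp: householder_def tail_coords_def)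

text \<open>The Householder vector h = t - |t| e_p, where t is the part of a on the coordinates
  p..N-1, satisfies h \<bullet> h = 2 a \<bullet> h; so the reflection along h maps a to a - h, which
  vanishes on the coordinates p+1..N-1.\<close>

lemma householder_self_dot:
  assumes "p < N"
  shows "dot N (householder N p a) (householder N p a) = 2 * dot N a (householder N p a)"
proof -
  define t where "t = tail_coords N p a"
  define r where "r = sqrt (dot N t t)"
  define h where "h = householder N p a"
  have h: "h j = t j - (if j = p then r else 0)" for j
    by (simp add: h_def householder_def t_def r_def)
  have tp: "t p = a p" using assms by (simp add: t_def tail_coords_def)
  have tt: "dot N t t = r\<^sup>2" unfolding r_def by (simp add: sum_nonneg)
  have ah: "dot N a h = dot N t h"
    by (intro sum.cong) (auto simp: h t_def tail_coords_def)
  have th: "dot N t h = r\<^sup>2 - r * a p"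
  proof -
    have "dot N t h = (\<Sum>j<N. t j * t j - (if j = p then r * t j else 0))"
      by (intro sum.cong) (auto simp: h algebra_simps)
    also have "\<dots> = dot N t t - (\<Sum>j<N. if j = p then r * t j else 0)"
      by (rule sum_subtractf)
    finally show ?thesis using assms tt tp by (simp add: sum.delta)
  qed
  have "dot N h h = (\<Sum>j<N. t j * h j - (if j = p then r * h j else 0))"
    by (intro sum.cong) (auto simp: h algebra_simps)
  also have "\<dots> = dot N t h - (\<Sum>j<N. if j = p then r * h j else 0)"
    by (rule sum_subtractf)
  also have "\<dots> = 2 * dot N a h"
    using assms th tp ah by (simp add: sum.delta h power2_eq_square algebra_simps)
  finally show ?thesis unfolding h_def .
qed

lemma reflect_householder_vanishes:
  assumes "p < N" "p < k" "k < N"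
  shows "reflect N (householder N p a) a k = 0"
proof -
  define h where "h = householder N p a"
  have hk: "h k = a k" using assms by (simp add: h_def householder_def tail_coords_def)
  show ?thesis
  proof (cases "dot N h h = 0")
    case True
    then have "h k * h k = 0" using assms(3) by (simp add: sum_nonneg_eq_0_iff)
    then show ?thesis using True hk by (simp add: reflect_def h_def[symmetric])
  next
    case False
    then have "2 * dot N a h / dot N h h = 1"
      using householder_self_dot[OF assms(1), of a] by (simp add: h_def)
    then show ?thesis using False hk by (simp add: reflect_def h_def[symmetric])
  qed
qed

definition supported_in_first :: "nat \<Rightarrow> nat \<Rightarrow> (nat \<Rightarrow> nat \<Rightarrow> real) \<Rightarrow> bool" where
  "supported_in_first N p U \<longleftrightarrow> (\<forall>i<p. \<forall>k. p \<le> k \<longrightarrow> k < N \<longrightarrow> U i k = 0)"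

lemma householder_step:
  assumes "p < N" "supported_in_first N p U"
  shows "\<exists>U'. gram N U' = gram N U \<and> supported_in_first N (Suc p) U'"
proof -
  define U' where "U' i = reflect N (householder N p (U p)) (U i)" for i
  have "gram N U' = gram N U" by (intro ext) (simp add: U'_def dot_reflect)
  moreover have "U' i = U i" if "i < p" for i
    using assms(2) that unfolding U'_def supported_in_first_def
    by (intro reflect_orthogonal householder_orthogonal) auto
  moreover have "U' p k = 0" if "p < k" "k < N" for k
    unfolding U'_def using assms(1) that by (rule reflect_householder_vanishes)
  ultimately have "gram N U' = gram N U \<and> supported_in_first N (Suc p) U'"
    using assms(2) unfolding supported_in_first_def by (metis Suc_le_eq less_SucE order_less_imp_le)
  then show ?thesis by (rule exI[of _ U'])
qed

lemma exists_supported_gram_eq: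
  assumes "m \<le> N"
  shows "\<exists>U'. gram N U' = gram N U \<and> supported_in_first N m U'"
  using assms
proof (induction m)
  case 0
  have "supported_in_first N 0 U" by (simp add: supported_in_first_def)
  then show ?case by blast
next
  case (Suc m)
  then obtain U1 where U1: "gram N U1 = gram N U" "supported_in_first N m U1" by auto
  obtain U2 where "gram N U2 = gram N U1" "supported_in_first N (Suc m) U2"
    using householder_step[OF _ U1(2)] Suc.prems by auto
  then show ?case using U1(1) by auto
qed

lemma dot_truncate:
  assumes "m \<le> N" "\<forall>k. m \<le> k \<longrightarrow> k < N \<longrightarrow> a k = 0"
  shows "dot N a b = dot m a b"
proof -
  have "dot N a b = dot m a b + (\<Sum>k\<in>{m..<N}. a k * b k)"
    using assms(1) by (metis atLeast0LessThan sum.atLeastLessThan_concat zero_le)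
  also have "(\<Sum>k\<in>{m..<N}. a k * b k) = 0" using assms(2) by (intro sum.neutral) auto
  finally show ?thesis by simp
qed

lemma exists_gram_eq_low_dim:
  assumes "finite V" "card V \<le> N" "unit_vectors N u V"
  shows "\<exists>v. unit_vectors (card V) v V \<and> (\<forall>i\<in>V. \<forall>j\<in>V. gram (card V) v i j = gram N u i j)"
proof -
  obtain g where g: "bij_betw g V {0..<card V}" using ex_bij_betw_finite_nat[OF assms(1)] by blast
  obtain U where U: "gram N U = gram N (\<lambda>l. u (inv_into V g l))" "supported_in_first N (card V) U"
    using exists_supported_gram_eq[OF assms(2), of "\<lambda>l. u (inv_into V g l)"] by blast
  define v where "v i = U (g i)" for i
  have gram_v: "gram (card V) v i j = gram N u i j" if "i \<in> V" "j \<in> V" for i j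
  proof -
    have "g i < card V" using g that by (auto simp: bij_betw_def)
    then have "gram (card V) v i j = gram N U (g i) (g j)"
      using U(2) assms(2) unfolding supported_in_first_def v_def by (intro dot_truncate[symmetric]) auto
    also have "\<dots> = gram N u i j"
      using U(1) g that by (simp add: fun_eq_iff bij_betw_imp_inj_on inv_into_f_f)
    finally show ?thesis .
  qed
  have "unit_vectors (card V) v V"
    using gram_v assms(3) by (simp add: power2_eq_square)
  with gram_v show ?thesis by blast
qed

lemma sdp_ge_higher_dim:
  assumes "graph V E" "card V \<le> N" "unit_vectors N u V"
  shows "edge_sum V E w (gram N u) \<le> sdp V E w"
proof -
  obtain v where v: "unit_vectors (card V) v V" "\<forall>i\<in>V. \<forall>j\<in>V. gram (card V) v i j = gram N u i j"
    using exists_gram_eq_low_dim[OF graph_finite[OF assms(1)] assms(2,3)] by blast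
  have "edge_sum V E w (gram N u) = edge_sum V E w (gram (card V) v)"
    using v(2) by (intro edge_sum_cong) auto
  also have "\<dots> \<le> sdp V E w" by (rule sdp_ge[OF v(1)])
  finally show ?thesis .
qed

section \<open>Subgraphs\<close>

lemma sum_lessThan_zero_padding:
  fixes g :: "nat \<Rightarrow> real"
  assumes "n \<le> N"
  shows "(\<Sum>k<N. if k < n then g k else 0) = (\<Sum>k<n. g k)"
  using sum.inter_restrict[of "{..<N}" g "{..<n}"] assms by (simp add: Int_absorb1)

lemma exists_gram_eq_padded:
  assumes "finite V" "V1 \<subseteq> V" "unit_vectors (card V1) u V1"
  shows "\<exists>u'. unit_vectors (card V) u' V \<and> (\<forall>i\<in>V1. \<forall>j\<in>V1. gram (card V) u' i j = gram (card V1) u i j)"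
proof -
  define n N where "n = card V1" and "N = card V"
  have "n \<le> N" unfolding n_def N_def using assms(1,2) by (rule card_mono)
  define u' where "u' i k = (if i \<in> V1 then if k < n then u i k else 0 else if k = 0 then 1 else 0)"
    for i k
  have gram_u': "gram N u' i j = gram n u i j" if "i \<in> V1" "j \<in> V1" for i j
  proof -
    have "gram N u' i j = (\<Sum>k<N. if k < n then u i k * u j k else 0)"
      using that by (intro sum.cong) (auto simp: u'_def)
    then show ?thesis using sum_lessThan_zero_padding[OF \<open>n \<le> N\<close>] by simp
  qed
  have "unit_vectors N u' V"
  proof
    fix i assume "i \<in> V"
    show "(\<Sum>k<N. (u' i k)\<^sup>2) = 1"
    proof (cases "i \<in> V1")
      case True
      then show ?thesis using gram_u'[OF True True] assms(3) by (simp add: n_def power2_eq_square)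
    next
      case False
      have "0 < N" unfolding N_def using \<open>i \<in> V\<close> assms(1) card_gt_0_iff by blast
      then show ?thesis using False unit_vectors_first_basis[of N "{i}"] by (simp add: u'_def)
    qed
  qed
  with gram_u' show ?thesis unfolding n_def N_def by blast
qed

lemma sdp_le_zero_extension:
  assumes "graph V1 E1" "graph V E" "V1 \<subseteq> V" "E1 \<subseteq> E"
  shows "sdp V1 E1 w \<le> sdp V E (\<lambda>e. if e \<in> E1 then w e else 0)"
proof (rule sdp_le[OF graph_finite[OF assms(1)]])
  fix u assume "unit_vectors (card V1) u V1"
  then obtain u' where u': "unit_vectors (card V) u' V"
    "\<forall>i\<in>V1. \<forall>j\<in>V1. gram (card V) u' i j = gram (card V1) u i j"
    using exists_gram_eq_padded[OF graph_finite[OF assms(2)] assms(3)] by blast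
  have "edge_sum V1 E1 w (gram (card V1) u) = edge_sum V1 E1 w (gram (card V) u')"
    using u'(2) by (intro edge_sum_cong) auto
  also have "\<dots> = edge_sum V E (\<lambda>e. if e \<in> E1 then w e else 0) (gram (card V) u')"
    using edge_sum_zero_extension[OF assms(1) graph_finite[OF assms(2)] assms(3,4)] by simp
  also have "\<dots> \<le> sdp V E (\<lambda>e. if e \<in> E1 then w e else 0)"
    using u'(1) by (rule sdp_ge)
  finally show "edge_sum V1 E1 w (gram (card V1) u) \<le> sdp V E (\<lambda>e. if e \<in> E1 then w e else 0)" .
qed

lemma ip_zero_extension_le:
  assumes "graph V1 E1" "graph V E" "V1 \<subseteq> V" "E1 \<subseteq> E"
  shows "ip V E (\<lambda>e. if e \<in> E1 then w e else 0) \<le> ip V1 E1 w"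
proof -
  obtain x where x: "signs V x" "ip V E (\<lambda>e. if e \<in> E1 then w e else 0)
      = edge_sum V E (\<lambda>e. if e \<in> E1 then w e else 0) (outer x)"
    using ip_attained[OF graph_finite[OF assms(2)]] by blast
  have "edge_sum V E (\<lambda>e. if e \<in> E1 then w e else 0) (outer x) = edge_sum V1 E1 w (outer x)"
    by (rule edge_sum_zero_extension[OF assms(1) graph_finite[OF assms(2)] assms(3,4)])
  also have "\<dots> \<le> ip V1 E1 w" using x(1) assms(3) by (intro ip_ge graph_finite[OF assms(1)]) auto
  finally show ?thesis using x(2) by simp
qed

lemma groth_mono_subgraph:
  assumes "graph V1 E1" "graph V E" "V1 \<subseteq> V" "E1 \<subseteq> E"
  shows "groth V1 E1 \<le> groth V E"
proof (rule groth_le[OF assms(1) groth_nonneg[OF assms(2)]])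
  fix w
  have "sdp V1 E1 w \<le> sdp V E (\<lambda>e. if e \<in> E1 then w e else 0)"
    by (rule sdp_le_zero_extension[OF assms])
  also have "\<dots> \<le> groth V E * ip V E (\<lambda>e. if e \<in> E1 then w e else 0)"
    by (rule sdp_le_groth_mult_ip[OF assms(2)])
  also have "\<dots> \<le> groth V E * ip V1 E1 w"
    by (intro mult_left_mono ip_zero_extension_le[OF assms] groth_nonneg[OF assms(2)])
  finally show "sdp V1 E1 w \<le> groth V E * ip V1 E1 w" .
qed

section \<open>Even functions of at most three signs\<close>

lemma eq_const_by_sign_flip:
  assumes "a \<in> C" "signs C y"
    and even: "\<And>y. signs C y \<Longrightarrow> F (\<lambda>i. - y i) = F y"
    and normalized: "\<And>z. signs C z \<Longrightarrow> z a = 1 \<Longrightarrow> F z = s"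
  shows "F y = s"
proof (cases "y a = 1")
  case False
  then have "y a = -1" using assms(1,2) by blast
  then have "F (\<lambda>i. - y i) = s" using assms(2) by (intro normalized) auto
  then show ?thesis using even[OF assms(2)] by simp
qed (use assms in blast)

lemma even_sign_function_pair:
  assumes "a \<noteq> b"
    and local: "\<And>y y'. y a = y' a \<Longrightarrow> y b = y' b \<Longrightarrow> H y = H y'"
    and even: "\<And>y. signs {a, b} y \<Longrightarrow> H (\<lambda>i. - y i) = H y"
  shows "\<exists>t s. \<forall>y. signs {a, b} y \<longrightarrow> H y + t * (y a * y b) = s"
proof -
  define h1 h2 where "h1 = H (\<lambda>_. 1)" and "h2 = H (\<lambda>i. if i = b then -1 else 1)"
  have "H y + (h2 - h1) / 2 * (y a * y b) = (h1 + h2) / 2" if "signs {a, b} y" for y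
  proof (rule eq_const_by_sign_flip[of a "{a, b}" y "\<lambda>y. H y + (h2 - h1) / 2 * (y a * y b)"])
    fix z assume z: "signs {a, b} z" "z a = 1"
    then consider "z b = 1" | "z b = -1" by auto
    then show "H z + (h2 - h1) / 2 * (z a * z b) = (h1 + h2) / 2"
    proof cases
      case 1
      then have "H z = h1" unfolding h1_def using z(2) by (intro local) auto
      then show ?thesis using 1 z(2) by (simp add: field_simps)
    next
      case 2
      then have "H z = h2" unfolding h2_def using z(2) assms(1) by (intro local) auto
      then show ?thesis using 2 z(2) by (simp add: field_simps)
    qed
  qed (use that even in auto)
  then show ?thesis by blast
qed

lemma even_sign_function_triangle:
  assumes "a \<noteq> b" "a \<noteq> c" "b \<noteq> c"
    and local: "\<And>y y'. y a = y' a \<Longrightarrow> y b = y' b \<Longrightarrow> y c = y' c \<Longrightarrow> H y = H y'"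
    and even: "\<And>y. signs {a, b, c} y \<Longrightarrow> H (\<lambda>i. - y i) = H y"
  shows "\<exists>tab tac tbc s. \<forall>y. signs {a, b, c} y \<longrightarrow>
           H y + tab * (y a * y b) + tac * (y a * y c) + tbc * (y b * y c) = s"
proof -
  define r where "r sb sc = H (\<lambda>i. if i = b then sb else if i = c then sc else 1)" for sb sc
  define tab tac tbc s where
    "tab = (r (-1) 1 + r (-1) (-1) - r 1 1 - r 1 (-1)) / 4" and
    "tac = (r 1 (-1) + r (-1) (-1) - r 1 1 - r (-1) 1) / 4" and
    "tbc = (r 1 (-1) + r (-1) 1 - r 1 1 - r (-1) (-1)) / 4" and
    "s = (r 1 1 + r 1 (-1) + r (-1) 1 + r (-1) (-1)) / 4"
  have "H y + tab * (y a * y b) + tac * (y a * y c) + tbc * (y b * y c) = s"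
    if "signs {a, b, c} y" for y
  proof (rule eq_const_by_sign_flip[of a "{a, b, c}" y
      "\<lambda>y. H y + tab * (y a * y b) + tac * (y a * y c) + tbc * (y b * y c)"])
    fix z assume z: "signs {a, b, c} z" "z a = 1"
    have "H z = r (z b) (z c)" unfolding r_def using z(2) assms(1-3) by (intro local) auto
    moreover have "z b = 1 \<or> z b = -1" "z c = 1 \<or> z c = -1" using z(1) by auto
    ultimately show "H z + tab * (z a * z b) + tac * (z a * z c) + tbc * (z b * z c) = s"
      using z(2) unfolding tab_def tac_def tbc_def s_def by (auto simp: field_simps)
  qed (use that even in auto)
  then show ?thesis by blast
qed

lemma even_sign_function_card_le_1:
  assumes "finite C" "card C \<le> 1" "signs C y"
    and local: "\<And>y y'. \<forall>i\<in>C. y i = y' i \<Longrightarrow> H y = H y'"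
    and even: "\<And>y. signs C y \<Longrightarrow> H (\<lambda>i. - y i) = H y"
  shows "H y = H (\<lambda>_. 1)"
proof -
  have "\<forall>i\<in>C. \<forall>j\<in>C. i = j" using assms(1,2) card_le_Suc0_iff_eq by auto
  then consider "\<forall>i\<in>C. y i = 1" | "\<forall>i\<in>C. - y i = 1" using assms(3) by force
  then show ?thesis
  proof cases
    case 2
    then have "H (\<lambda>i. - y i) = H (\<lambda>_. 1)" by (intro local) auto
    then show ?thesis using even[OF assms(3)] by simp
  qed (intro local, simp)
qed

lemma edge_sum_outer_pair:
  assumes "a \<noteq> b" "{a, b} \<in> E" "{a} \<notin> E" "{b} \<notin> E"
  shows "edge_sum {a, b} E t (outer y) = t {a, b} * (y a * y b)"
  using assms unfolding edge_sum_def by (simp add: insert_commute algebra_simps)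

lemma edge_sum_outer_triangle:
  assumes "a \<noteq> b" "a \<noteq> c" "b \<noteq> c" "{a, b} \<in> E" "{a, c} \<in> E" "{b, c} \<in> E"
    "{a} \<notin> E" "{b} \<notin> E" "{c} \<notin> E"
  shows "edge_sum {a, b, c} E t (outer y)
       = t {a, b} * (y a * y b) + t {a, c} * (y a * y c) + t {b, c} * (y b * y c)"
  using assms unfolding edge_sum_def by (simp add: insert_commute algebra_simps)

text \<open>After normalising one sign to 1, an even function of k \<le> 3 signs takes 2^(k-1) values,
  which the constant and the k(k-1)/2 pair products can match exactly; for k = 4 they cannot.\<close>

lemma even_sign_function_clique_form:
  assumes "finite C" "card C \<le> 3"
    and clique: "\<forall>i\<in>C. \<forall>j\<in>C. i \<noteq> j \<longrightarrow> {i, j} \<in> E" and loops: "\<And>i. {i} \<notin> E"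
    and local: "\<And>y y'. \<forall>i\<in>C. y i = y' i \<Longrightarrow> H y = H y'"
    and even: "\<And>y. signs C y \<Longrightarrow> H (\<lambda>i. - y i) = H y"
  shows "\<exists>t s. \<forall>y. signs C y \<longrightarrow> H y + edge_sum C E t (outer y) = s"
proof -
  consider "card C \<le> 1" | "card C = 2" | "card C = 3" using assms(2) by linarith
  then show ?thesis
  proof cases
    case 1
    have "H y + edge_sum C E (\<lambda>_. 0) (outer y) = H (\<lambda>_. 1)" if "signs C y" for y
    proof -
      have "H y = H (\<lambda>_. 1)"
        using assms(1) 1 that local even by (rule even_sign_function_card_le_1)
      then show ?thesis by (simp add: edge_sum_zero_weights)
    qed
    then show ?thesis by (intro exI[of _ "\<lambda>_. 0"] exI[of _ "H (\<lambda>_. 1)"]) simp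
  next
    case 2
    then obtain a b where C: "C = {a, b}" "a \<noteq> b" by (auto simp: card_2_iff)
    have "\<exists>t s. \<forall>y. signs {a, b} y \<longrightarrow> H y + t * (y a * y b) = s"
    proof (rule even_sign_function_pair[OF C(2)])
      show "H y = H y'" if "y a = y' a" "y b = y' b" for y y' using that C(1) by (intro local) auto
      show "H (\<lambda>i. - y i) = H y" if "signs {a, b} y" for y using that C(1) by (intro even) auto
    qed
    then obtain t s where ts: "\<forall>y. signs C y \<longrightarrow> H y + t * (y a * y b) = s" using C(1) by blast
    have "edge_sum C E (\<lambda>_. t) (outer y) = t * (y a * y b)" for y
      using C clique loops by (simp add: edge_sum_outer_pair)
    then show ?thesis using ts by (intro exI[of _ "\<lambda>_. t"] exI[of _ s]) simp
  next
    case 3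
    then obtain a b c where C: "C = {a, b, c}" "a \<noteq> b" "a \<noteq> c" "b \<noteq> c"
      by (auto simp: card_3_iff)
    have "\<exists>tab tac tbc s. \<forall>y. signs {a, b, c} y \<longrightarrow>
           H y + tab * (y a * y b) + tac * (y a * y c) + tbc * (y b * y c) = s"
    proof (rule even_sign_function_triangle[OF C(2-4)])
      show "H y = H y'" if "y a = y' a" "y b = y' b" "y c = y' c" for y y'
        using that C(1) by (intro local) auto
      show "H (\<lambda>i. - y i) = H y" if "signs {a, b, c} y" for y using that C(1) by (intro even) auto
    qed
    then obtain tab tac tbc s where ts:
      "\<forall>y. signs C y \<longrightarrow> H y + tab * (y a * y b) + tac * (y a * y c) + tbc * (y b * y c) = s"
      using C(1) by blast
    define t where "t e = (if e = {a, b} then tab else if e = {a, c} then tac else tbc)" for e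
    have "edge_sum C E t (outer y) = tab * (y a * y b) + tac * (y a * y c) + tbc * (y b * y c)" for y
      using C clique loops by (simp add: edge_sum_outer_triangle t_def doubleton_eq_iff)
    then show ?thesis using ts by (intro exI[of _ t] exI[of _ s]) (simp add: add.assoc)
  qed
qed

section \<open>Clique sums\<close>

definition cond_max :: "'a set \<Rightarrow> 'a set \<Rightarrow> (('a \<Rightarrow> real) \<Rightarrow> real) \<Rightarrow> ('a \<Rightarrow> real) \<Rightarrow> real" where
  "cond_max V C A y = Max {A x | x. signs V x \<and> (\<forall>i\<in>C. x i = y i)}"

lemma cond_max_ge:
  assumes "finite V" "\<And>x x'. \<forall>i\<in>V. x i = x' i \<Longrightarrow> A x = A x'" "signs V x"
  shows "A x \<le> cond_max V C A x"
  unfolding cond_max_def using assms(3) by (intro Max_ge finite_sign_values[OF assms(1,2)]) auto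

lemma cond_max_attained:
  assumes "finite V" "\<And>x x'. \<forall>i\<in>V. x i = x' i \<Longrightarrow> A x = A x'" "signs C y"
  obtains x where "signs V x" "\<forall>i\<in>C. x i = y i" "A x = cond_max V C A y"
proof -
  have "A (\<lambda>i. if i \<in> C then y i else 1) \<in> {A x | x. signs V x \<and> (\<forall>i\<in>C. x i = y i)}"
    using assms(3) by (intro CollectI exI[of _ "\<lambda>i. if i \<in> C then y i else 1"]) auto
  then have "cond_max V C A y \<in> {A x | x. signs V x \<and> (\<forall>i\<in>C. x i = y i)}"
    unfolding cond_max_def by (intro Max_in finite_sign_values[OF assms(1,2)]) auto
  then show ?thesis using that by auto
qed

lemma cond_max_cong: "\<forall>i\<in>C. y i = y' i \<Longrightarrow> cond_max V C A y = cond_max V C A y'"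
  unfolding cond_max_def by (metis (no_types, lifting))

lemma cond_max_even:
  assumes "\<And>x. A (\<lambda>i. - x i) = A x"
  shows "cond_max V C A (\<lambda>i. - y i) = cond_max V C A y"
proof -
  have flip: "{A x | x. signs V x \<and> (\<forall>i\<in>C. x i = - z i)} \<subseteq> {A x | x. signs V x \<and> (\<forall>i\<in>C. x i = z i)}"
    for z
  proof
    fix r assume "r \<in> {A x | x. signs V x \<and> (\<forall>i\<in>C. x i = - z i)}"
    then obtain x where "r = A x" "signs V x" "\<forall>i\<in>C. x i = - z i" by blast
    then show "r \<in> {A x | x. signs V x \<and> (\<forall>i\<in>C. x i = z i)}"
      using assms[of x] by (intro CollectI exI[of _ "\<lambda>i. - x i"]) auto
  qed
  show ?thesis
    unfolding cond_max_def using flip[of y] flip[of "\<lambda>i. - y i"] by (simp add: subset_antisym)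
qed

lemma exists_clique_weights_cond_max_const:
  fixes w :: "'a set \<Rightarrow> real"
  assumes "graph V E" "C \<subseteq> V" "card C \<le> 3" "\<forall>i\<in>C. \<forall>j\<in>C. i \<noteq> j \<longrightarrow> {i, j} \<in> E"
  defines "A \<equiv> \<lambda>x. edge_sum V E (\<lambda>e. if e \<subseteq> C then 0 else w e) (outer x)"
  shows "\<exists>t s. \<forall>y. signs C y \<longrightarrow> cond_max V C A y + edge_sum C E t (outer y) = s"
proof -
  have "finite C" using assms(2) graph_finite[OF assms(1)] by (rule finite_subset)
  then show ?thesis using assms(3,4) graph_no_loop[OF assms(1)]
  proof (rule even_sign_function_clique_form)
    show "cond_max V C A y = cond_max V C A y'" if "\<forall>i\<in>C. y i = y' i" for y y'
      using that by (rule cond_max_cong)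
    show "cond_max V C A (\<lambda>i. - y i) = cond_max V C A y" for y
      by (rule cond_max_even) (simp add: A_def)
  qed
qed

lemma exists_clique_weights_every_pattern_optimal:
  assumes "graph V E" "C \<subseteq> V" "card C \<le> 3" "\<forall>i\<in>C. \<forall>j\<in>C. i \<noteq> j \<longrightarrow> {i, j} \<in> E"
  shows "\<exists>t. \<forall>y. signs C y \<longrightarrow> (\<exists>x. signs V x \<and> (\<forall>i\<in>C. x i = y i) \<and>
           edge_sum V E (\<lambda>e. if e \<subseteq> C then t e else w e) (outer x)
             = ip V E (\<lambda>e. if e \<subseteq> C then t e else w e))"
proof -
  have finV: "finite V" using assms(1) by (rule graph_finite)
  define A where "A x = edge_sum V E (\<lambda>e. if e \<subseteq> C then 0 else w e) (outer x)" for x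
  have A_local: "A x = A x'" if "\<forall>i\<in>V. x i = x' i" for x x'
    unfolding A_def using that by (intro edge_sum_cong) auto
  obtain t s where ts: "\<forall>y. signs C y \<longrightarrow> cond_max V C A y + edge_sum C E t (outer y) = s"
    using exists_clique_weights_cond_max_const[OF assms, of w] unfolding A_def by blast
  define w1 where "w1 = (\<lambda>e. if e \<subseteq> C then t e else w e)"
  have split: "edge_sum V E w1 (outer x) = A x + edge_sum C E t (outer x)" for x
  proof -
    have "w1 = (\<lambda>e. (if e \<subseteq> C then 0 else w e) + (if e \<subseteq> C then t e else 0))"
      by (auto simp: w1_def)
    then show ?thesis
      unfolding A_def by (simp add: edge_sum_add edge_sum_restrict_weights[OF finV assms(2)])
  qed
  have le: "edge_sum V E w1 (outer x) \<le> s" if "signs V x" for x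
  proof -
    have "A x \<le> cond_max V C A x" using finV A_local that by (rule cond_max_ge)
    moreover have "cond_max V C A x + edge_sum C E t (outer x) = s" using ts that assms(2) by auto
    ultimately show ?thesis using split by simp
  qed
  have attained: "\<exists>x. signs V x \<and> (\<forall>i\<in>C. x i = y i) \<and> edge_sum V E w1 (outer x) = s"
    if y: "signs C y" for y
  proof -
    obtain x where x: "signs V x" "\<forall>i\<in>C. x i = y i" "A x = cond_max V C A y"
      using cond_max_attained[of V A, OF finV A_local y] by blast
    have "edge_sum C E t (outer x) = edge_sum C E t (outer y)" using x(2) by (intro edge_sum_cong) auto
    then have "edge_sum V E w1 (outer x) = s" using split[of x] x(3) ts y by simp
    then show ?thesis using x(1,2) by (intro exI[of _ x]) simp
  qed
  have "ip V E w1 = s"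
  proof (rule antisym)
    obtain x where "signs V x" "ip V E w1 = edge_sum V E w1 (outer x)" by (rule ip_attained[OF finV])
    then show "ip V E w1 \<le> s" using le by simp
    obtain x where "signs V x" "edge_sum V E w1 (outer x) = s" using attained[of "\<lambda>_. 1"] by auto
    then show "s \<le> ip V E w1" using ip_ge[OF finV, of x E w1] by simp
  qed
  then show ?thesis using attained unfolding w1_def by (intro exI[of _ t]) simp
qed

lemma edge_sum_clique_sum:
  assumes "graph V1 E1" "graph V2 E2"
    and "\<forall>i\<in>V1 \<inter> V2. \<forall>j\<in>V1 \<inter> V2. i \<noteq> j \<longrightarrow> {i, j} \<in> E1 \<and> {i, j} \<in> E2"
  shows "edge_sum (V1 \<union> V2) (E1 \<union> E2) w f
       = edge_sum V1 E1 (\<lambda>e. if e \<subseteq> V1 \<inter> V2 then t e else w e) f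
         + edge_sum V2 E2 (\<lambda>e. if e \<subseteq> V1 \<inter> V2 then w e - t e else w e) f"
proof -
  have fin: "finite (V1 \<union> V2)" using assms(1,2) graph_finite by blast
  have "w e = (if e \<in> E1 then if e \<subseteq> V1 \<inter> V2 then t e else w e else 0)
            + (if e \<in> E2 then if e \<subseteq> V1 \<inter> V2 then w e - t e else w e else 0)"
    if e_edge: "e \<in> E1 \<union> E2" for e
  proof -
    obtain i j where e: "e = {i, j}" "i \<noteq> j"
      using e_edge assms(1,2) unfolding graph_def by blast
    have "e \<in> E1 \<and> e \<in> E2 \<longleftrightarrow> e \<subseteq> V1 \<inter> V2"
      using assms e graph_edge_subset[OF assms(1)] graph_edge_subset[OF assms(2)] by blast
    then show ?thesis using e_edge by auto
  qed
  then have "edge_sum (V1 \<union> V2) (E1 \<union> E2) w f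
      = edge_sum (V1 \<union> V2) E1 (\<lambda>e. if e \<subseteq> V1 \<inter> V2 then t e else w e) f
        + edge_sum (V1 \<union> V2) E2 (\<lambda>e. if e \<subseteq> V1 \<inter> V2 then w e - t e else w e) f"
    by (rule edge_sum_Un)
  then show ?thesis
    using edge_sum_superset_vertices[OF assms(1) fin] edge_sum_superset_vertices[OF assms(2) fin]
    by simp
qed

lemma ip_glue_ge:
  assumes "graph V1 E1" "graph V2 E2"
    and split: "\<And>x. edge_sum (V1 \<union> V2) E w (outer x)
                      = edge_sum V1 E1 w1 (outer x) + edge_sum V2 E2 w2 (outer x)"
    and extend: "\<And>y. signs (V1 \<inter> V2) y \<Longrightarrow> \<exists>x. signs V1 x \<and> (\<forall>i\<in>V1 \<inter> V2. x i = y i)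
                      \<and> edge_sum V1 E1 w1 (outer x) = ip V1 E1 w1"
  shows "ip V1 E1 w1 + ip V2 E2 w2 \<le> ip (V1 \<union> V2) E w"
proof -
  have fin: "finite V1" "finite V2" using assms(1,2) by (auto intro: graph_finite)
  obtain x2 where x2: "signs V2 x2" "ip V2 E2 w2 = edge_sum V2 E2 w2 (outer x2)"
    by (rule ip_attained[OF fin(2)])
  obtain x1 where x1: "signs V1 x1" "\<forall>i\<in>V1 \<inter> V2. x1 i = x2 i" "edge_sum V1 E1 w1 (outer x1) = ip V1 E1 w1"
    using extend[of x2] x2(1) by auto
  define x where "x i = (if i \<in> V1 then x1 i else x2 i)" for i
  have "edge_sum V1 E1 w1 (outer x) = edge_sum V1 E1 w1 (outer x1)"
    by (intro edge_sum_cong) (simp add: x_def)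
  moreover have "edge_sum V2 E2 w2 (outer x) = edge_sum V2 E2 w2 (outer x2)"
    using x1(2) by (intro edge_sum_cong) (auto simp: x_def)
  moreover have "signs (V1 \<union> V2) x" using x1(1) x2(1) by (auto simp: x_def)
  ultimately show ?thesis
    using split[of x] x1(3) x2(2) ip_ge[of "V1 \<union> V2" x E w] fin by simp
qed

lemma sdp_le_sum:
  assumes "graph V1 E1" "graph V2 E2"
    and split: "\<And>f. edge_sum (V1 \<union> V2) E w f = edge_sum V1 E1 w1 f + edge_sum V2 E2 w2 f"
  shows "sdp (V1 \<union> V2) E w \<le> sdp V1 E1 w1 + sdp V2 E2 w2"
proof (rule sdp_le)
  show "finite (V1 \<union> V2)" using assms(1,2) by (auto intro: graph_finite)
  fix u assume u: "unit_vectors (card (V1 \<union> V2)) u (V1 \<union> V2)"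
  have "card V1 \<le> card (V1 \<union> V2)" "card V2 \<le> card (V1 \<union> V2)"
    using \<open>finite (V1 \<union> V2)\<close> by (auto intro: card_mono)
  then show "edge_sum (V1 \<union> V2) E w (gram (card (V1 \<union> V2)) u) \<le> sdp V1 E1 w1 + sdp V2 E2 w2"
    unfolding split using u by (intro add_mono sdp_ge_higher_dim assms(1,2)) auto
qed

lemma clique_sum_sdp_le:
  assumes "graph V1 E1" "graph V2 E2"
    and "\<forall>i\<in>V1 \<inter> V2. \<forall>j\<in>V1 \<inter> V2. i \<noteq> j \<longrightarrow> {i, j} \<in> E1 \<and> {i, j} \<in> E2"
    and "card (V1 \<inter> V2) \<le> 3"
  shows "sdp (V1 \<union> V2) (E1 \<union> E2) w
       \<le> max (groth V1 E1) (groth V2 E2) * ip (V1 \<union> V2) (E1 \<union> E2) w"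
proof -
  let ?K = "max (groth V1 E1) (groth V2 E2)"
  obtain t where t: "\<forall>y. signs (V1 \<inter> V2) y \<longrightarrow> (\<exists>x. signs V1 x \<and> (\<forall>i\<in>V1 \<inter> V2. x i = y i) \<and>
      edge_sum V1 E1 (\<lambda>e. if e \<subseteq> V1 \<inter> V2 then t e else w e) (outer x)
        = ip V1 E1 (\<lambda>e. if e \<subseteq> V1 \<inter> V2 then t e else w e))"
    using exists_clique_weights_every_pattern_optimal[OF assms(1) _ assms(4)] assms(3) by blast
  define w1 w2 where "w1 = (\<lambda>e. if e \<subseteq> V1 \<inter> V2 then t e else w e)"
    and "w2 = (\<lambda>e. if e \<subseteq> V1 \<inter> V2 then w e - t e else w e)"
  have split: "edge_sum (V1 \<union> V2) (E1 \<union> E2) w f = edge_sum V1 E1 w1 f + edge_sum V2 E2 w2 f" for f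
    unfolding w1_def w2_def by (rule edge_sum_clique_sum[OF assms(1-3)])
  have "sdp (V1 \<union> V2) (E1 \<union> E2) w \<le> sdp V1 E1 w1 + sdp V2 E2 w2"
    using assms(1,2) split by (rule sdp_le_sum)
  also have "\<dots> \<le> groth V1 E1 * ip V1 E1 w1 + groth V2 E2 * ip V2 E2 w2"
    by (intro add_mono sdp_le_groth_mult_ip assms(1,2))
  also have "\<dots> \<le> ?K * ip V1 E1 w1 + ?K * ip V2 E2 w2"
    by (intro add_mono mult_right_mono ip_nonneg assms(1,2)) auto
  also have "\<dots> \<le> ?K * ip (V1 \<union> V2) (E1 \<union> E2) w"
  proof -
    have "ip V1 E1 w1 + ip V2 E2 w2 \<le> ip (V1 \<union> V2) (E1 \<union> E2) w"
      using assms(1,2) split by (rule ip_glue_ge) (unfold w1_def, use t in blast)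
    then show ?thesis
      unfolding distrib_left[symmetric] using groth_nonneg[OF assms(1)] by (simp add: mult_left_mono)
  qed
  finally show ?thesis .
qed

theorem mainTheorem5:
  fixes V1 V2 :: "'a set" and E1 E2 :: "'a set set"
  assumes "graph V1 E1" and "graph V2 E2"
    and "\<forall>i\<in>V1 \<inter> V2. \<forall>j\<in>V1 \<inter> V2. i \<noteq> j \<longrightarrow> {i, j} \<in> E1 \<and> {i, j} \<in> E2"
    and "card (V1 \<inter> V2) \<le> 3"
  shows "groth (V1 \<union> V2) (E1 \<union> E2) = max (groth V1 E1) (groth V2 E2)"
proof (rule antisym)
  have G: "graph (V1 \<union> V2) (E1 \<union> E2)" using assms(1,2) by (rule graph_Un)
  show "groth (V1 \<union> V2) (E1 \<union> E2) \<le> max (groth V1 E1) (groth V2 E2)"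
    using G groth_nonneg[OF assms(1)] clique_sum_sdp_le[OF assms]
    by (intro groth_le) auto
  show "max (groth V1 E1) (groth V2 E2) \<le> groth (V1 \<union> V2) (E1 \<union> E2)"
    using groth_mono_subgraph[OF assms(1) G] groth_mono_subgraph[OF assms(2) G] by auto
qed

end
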